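(* Let $\kappa\in\mathbb{N}$, $\eta\in\{2,3,\ldots\}\cup\{\infty\}$, $p\in\mathbb{N}$, $p\ge1$, and assume $\pmb{\lambda}=\{\lambda_{-k}\}_{k=0}^{\kappa-1}\cup\{\lambda_{i,j}\}_{i,j=1}^{\eta,p}\subset(0,\infty)$ admits a subnormal completion. Then for every $M\in(0,\infty)$ the set $\mathcal{U}^M_{\pmb{\lambda}}$ is compact in $\mathcal{P}([0,M])^{\eta}$ with the product of the weak topologies.
   Context: $\mathcal{P}([0,M])$ is the set of Borel probability measures on $[0,M]$ with the weak topology (convergence against continuous functions). $\mathcal{U}^M_{\pmb{\lambda}}$ is the set of sequences $(\mu_i)_{i=1}^{\eta}$ of Borel measures on $[0,M]$ such that $\prod_{j=2}^{n+1}\lambda_{i,j}^2=\int_0^M t^n\,d\mu_i$ for $i\in\mathbb{N}\cap[1,\eta]$, $n\in\mathbb{N}\cap[0,p-1]$ (empty product $=1$, so each $\mu_i$ is a probability measure); $\sum_{i=1}^{\eta}\lambda_{i,1}^2\int_0^M t^{-k-1}d\mu_i(t)=\frac{1}{\prod_{j=0}^{k-1}\lambda_{-j}^2}$ for $k\in\mathbb{N}\cap[0,\kappa-1]$; and $\sum_{i=1}^{\eta}\lambda_{i,1}^2\int_0^M t^{-\kappa-1}d\mu_i(t)\le\frac{1}{\prod_{j=0}^{\kappa-1}\lambda_{-j}^2}$ (with $1/0=\infty$). Subnormal completion: there is a bounded subnormal weighted shift on the directed tree $\mathcal{T}_{\eta,\kappa}$ (vertices $\{-k\}_{0\le k\le\kappa}\sqcup\{(i,j)\}$,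 edges $(-k,-k+1)$, $(0,(i,1))$, $((i,j),(i,j+1))$, $S e_v=\sum_{u\text{ child of }v}\lambda'_ue_u$) whose weights at $-k$ ($k\le\kappa-1$) and $(i,j)$ ($j\le p$) equal the given $\lambda$'s. *)

theory Defs
  imports "HOL-Analysis.Analysis" "HOL-Probability.Probability"
begin

definition l2 :: "'a set \<Rightarrow> ('a \<Rightarrow> complex) set" where
  "l2 A = {f. (\<forall>x. x \<notin> A \<longrightarrow> f x = 0) \<and> (\<lambda>x. (cmod (f x))\<^sup>2) summable_on A}"

definition l2inner :: "'a set \<Rightarrow> ('a \<Rightarrow> complex) \<Rightarrow> ('a \<Rightarrow> complex) \<Rightarrow> complex" where
  "l2inner A f g = infsum (\<lambda>x. f x * cnj (g x)) A"

definition l2norm :: "'a set \<Rightarrow> ('a \<Rightarrow> complex) \<Rightarrow> real" where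
  "l2norm A f = sqrt (infsum (\<lambda>x. (cmod (f x))\<^sup>2) A)"

definition bounded_op :: "'a set \<Rightarrow> 'b set \<Rightarrow> (('a \<Rightarrow> complex) \<Rightarrow> ('b \<Rightarrow> complex)) \<Rightarrow> bool" where
  "bounded_op A B T \<longleftrightarrow>
     (\<forall>f\<in>l2 A. T f \<in> l2 B) \<and>
     (\<forall>f\<in>l2 A. \<forall>g\<in>l2 A. T (\<lambda>x. f x + g x) = (\<lambda>y. T f y + T g y)) \<and>
     (\<forall>f\<in>l2 A. \<forall>c::complex. T (\<lambda>x. c * f x) = (\<lambda>y. c * T f y)) \<and>
     (\<exists>C. \<forall>f\<in>l2 A. l2norm B (T f) \<le> C * l2norm A f)"

definition normal_op :: "((nat \<Rightarrow> complex) \<Rightarrow> (nat \<Rightarrow> complex)) \<Rightarrow> bool" where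
  "normal_op N \<longleftrightarrow> bounded_op UNIV UNIV N \<and>
     (\<exists>Nst. bounded_op UNIV UNIV Nst \<and>
        (\<forall>x\<in>l2 UNIV. \<forall>y\<in>l2 UNIV. l2inner UNIV (N x) y = l2inner UNIV x (Nst y)) \<and>
        (\<forall>x\<in>l2 UNIV. N (Nst x) = Nst (N x)))"

text \<open>Since the minimal normal extension of an operator on a
  separable space lives on a separable space, the ambient space can be taken to be l2(nat).\<close>
definition subnormal_op :: "'a set \<Rightarrow> (('a \<Rightarrow> complex) \<Rightarrow> ('a \<Rightarrow> complex)) \<Rightarrow> bool" where
  "subnormal_op A T \<longleftrightarrow> bounded_op A A T \<and>
     (\<exists>N J. normal_op N \<and> bounded_op A UNIV J \<and>
        (\<forall>f\<in>l2 A. l2norm UNIV (J f) = l2norm A f) \<and>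
        (\<forall>f\<in>l2 A. N (J f) = J (T f)))"

datatype vtx = Neg nat | Br nat nat  (* Neg k = vertex -k;  Br i j = vertex (i,j) *)

definition branches :: "enat \<Rightarrow> nat set" where
  "branches \<eta> = {i. 1 \<le> i \<and> enat i \<le> \<eta>}"

definition tree_V :: "nat \<Rightarrow> enat \<Rightarrow> vtx set" where
  "tree_V \<kappa> \<eta> = {Neg k | k. k \<le> \<kappa>} \<union> {Br i j | i j. i \<in> branches \<eta> \<and> 1 \<le> j}"

text \<open>Parent of a non-root vertex (the root is Neg kappa).\<close>
fun par :: "vtx \<Rightarrow> vtx" where
  "par (Neg k) = Neg (Suc k)"
| "par (Br i j) = (if j \<le> 1 then Neg 0 else Br i (j - 1))"

definition wshift :: "nat \<Rightarrow> enat \<Rightarrow> (vtx \<Rightarrow> real) \<Rightarrow> (vtx \<Rightarrow> complex) \<Rightarrow> (vtx \<Rightarrow> complex)" where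
  "wshift \<kappa> \<eta> w f v = (if v \<in> tree_V \<kappa> \<eta> \<and> v \<noteq> Neg \<kappa> then complex_of_real (w v) * f (par v) else 0)"

definition has_subnormal_completion ::
  "nat \<Rightarrow> enat \<Rightarrow> nat \<Rightarrow> (nat \<Rightarrow> real) \<Rightarrow> (nat \<Rightarrow> nat \<Rightarrow> real) \<Rightarrow> bool" where
  "has_subnormal_completion \<kappa> \<eta> p lneg lam \<longleftrightarrow>
     (\<exists>w. (\<forall>v\<in>tree_V \<kappa> \<eta> - {Neg \<kappa>}. w v > 0) \<and>
          (\<forall>k<\<kappa>. w (Neg k) = lneg k) \<and>
          (\<forall>i\<in>branches \<eta>. \<forall>j\<in>{1..p}. w (Br i j) = lam i j) \<and>
          subnormal_op (tree_V \<kappa> \<eta>) (wshift \<kappa> \<eta> w))"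

definition borel_0M :: "real \<Rightarrow> real measure" where
  "borel_0M M = restrict_space borel {0..M}"

definition probs_0M :: "real \<Rightarrow> real measure set" where
  "probs_0M M = {\<mu>. sets \<mu> = sets (borel_0M M) \<and> prob_space \<mu>}"

definition weak_top :: "real \<Rightarrow> real measure topology" where
  "weak_top M = pullback_topology (probs_0M M)
      (\<lambda>\<mu>. restrict (\<lambda>f. integral\<^sup>L \<mu> f) {f. continuous_on {0..M} f})
      (product_topology (\<lambda>_. euclideanreal) {f. continuous_on {0..M} f})"

definition inv_pow :: "nat \<Rightarrow> real \<Rightarrow> ennreal" where
  "inv_pow k t = (if t = 0 then \<infinity> else ennreal (1 / t ^ (k + 1)))"

definition U_set :: "real \<Rightarrow> nat \<Rightarrow> enat \<Rightarrow> nat \<Rightarrow> (nat \<Rightarrow> real) \<Rightarrow> (nat \<Rightarrow> nat \<Rightarrow> real)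
    \<Rightarrow> (nat \<Rightarrow> real measure) set" where
  "U_set M \<kappa> \<eta> p lneg lam =
     {\<mu> \<in> extensional (branches \<eta>).
        (\<forall>i\<in>branches \<eta>. sets (\<mu> i) = sets (borel_0M M)) \<and>
        (\<forall>i\<in>branches \<eta>. \<forall>n<p.
            (\<integral>\<^sup>+ t. ennreal (t ^ n) \<partial>(\<mu> i)) = ennreal (\<Prod>j\<in>{2..n+1}. (lam i j)\<^sup>2)) \<and>
        (\<forall>k<\<kappa>. (\<Sum>i. if i \<in> branches \<eta> then ennreal ((lam i 1)\<^sup>2) * (\<integral>\<^sup>+ t. inv_pow k t \<partial>(\<mu> i)) else 0)
                 = ennreal (1 / (\<Prod>j<k. (lneg j)\<^sup>2))) \<and>
        (\<Sum>i. if i \<in> branches \<eta> then ennreal ((lam i 1)\<^sup>2) * (\<integral>\<^sup>+ t. inv_pow \<kappa> t \<partial>(\<mu> i)) else 0)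
                 \<le> ennreal (1 / (\<Prod>j<\<kappa>. (lneg j)\<^sup>2))}"

end

theory Submission
  imports Defs
begin

text \<open>Integration against continuous functions embeds \<open>P([0,M])\<close> into a product of compact
  intervals, and the weak topology is the induced one. The image is closed: a point \<open>L\<close> of its
  closure agrees, on a countable dense family of polynomials, with the limit of a subsequence
  selected by Helly's theorem, hence everywhere. So \<open>P([0,M])\<close> and its powers are compact.

  Inside such a power, \<open>U\<close> is closed. The moment conditions are continuous. The inverse moments
  \<open>\<integral> t\<^sup>-\<^sup>k\<^sup>-\<^sup>1 d\<mu>\<^sub>i\<close> are suprema of integrals of continuous truncations, so the weighted
  inverse moment sums are lower semicontinuous and the upper bounds are closed conditions. The
  lower bounds for \<open>k < \<kappa>\<close> survive limits because the \<open>\<kappa>\<close>-th sum is bounded: near \<open>0\<close>,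
  \<open>t\<^sup>-\<^sup>k\<^sup>-\<^sup>1 \<le> (n + 1)\<^sup>k\<^sup>-\<^sup>\<kappa> t\<^sup>-\<^sup>\<kappa>\<^sup>-\<^sup>1\<close>, and the tail of the series over the branches is small
  because \<open>\<Sum>\<^sub>i (lam i 1)\<^sup>2\<close> converges, a point of \<open>U\<close> having finite \<open>0\<close>-th inverse moment sum.\<close>

lemma compactin_pullback_topology:
  assumes "S \<subseteq> A" and "compactin T (f ` S)"
  shows "compactin (pullback_topology A f T) S"
  unfolding compactin_def
proof (intro conjI allI impI)
  show "S \<subseteq> topspace (pullback_topology A f T)"
    using assms compactin_subset_topspace by (fastforce simp: topspace_pullback_topology)
next
  fix \<U> assume \<U>: "(\<forall>U\<in>\<U>. openin (pullback_topology A f T) U) \<and> S \<subseteq> \<Union>\<U>"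
  then obtain V where V: "\<And>U. U \<in> \<U> \<Longrightarrow> openin T (V U) \<and> U = f -` V U \<inter> A"
    unfolding openin_pullback_topology by metis
  have "f ` S \<subseteq> \<Union>(V ` \<U>)"
    using \<U> V assms(1) by blast
  then obtain \<G> where \<G>: "finite \<G>" "\<G> \<subseteq> \<U>" "f ` S \<subseteq> \<Union>(V ` \<G>)"
    using assms(2) V unfolding compactin_def by (metis (no_types, lifting) finite_subset_image image_iff)
  have "S \<subseteq> \<Union>\<G>"
    using \<G> V assms(1) by blast
  with \<G> show "\<exists>\<F>. finite \<F> \<and> \<F> \<subseteq> \<U> \<and> S \<subseteq> \<Union>\<F>"
    by blast
qed

lemma closedin_Collect_all:
  assumes "\<And>j. closedin X {x \<in> topspace X. P j x}"
  shows "closedin X {x \<in> topspace X. \<forall>j. P j x}"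
proof -
  have "closedin X (\<Inter>j. {x \<in> topspace X. P j x})"
    using assms by (intro closedin_Inter) auto
  moreover have "(\<Inter>j. {x \<in> topspace X. P j x}) = {x \<in> topspace X. \<forall>j. P j x}"
    by auto
  ultimately show ?thesis
    by simp
qed

lemma closedin_Collect_imp:
  assumes "Q \<Longrightarrow> closedin X {x \<in> topspace X. P x}"
  shows "closedin X {x \<in> topspace X. Q \<longrightarrow> P x}"
  using assms by (cases Q) auto

lemma closedin_Collect_conj:
  assumes "closedin X {x \<in> topspace X. P x}" and "closedin X {x \<in> topspace X. Q x}"
  shows "closedin X {x \<in> topspace X. P x \<and> Q x}"
  using closedin_Int[OF assms] by (simp add: Collect_conj_eq Int_ac)

lemma closedin_continuous_map_real:
  assumes "continuous_map X euclideanreal f"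
  shows "closedin X {x \<in> topspace X. f x \<le> c}" "closedin X {x \<in> topspace X. c \<le> f x}"
    "closedin X {x \<in> topspace X. f x = c}"
  using closedin_continuous_map_preimage[OF assms, of "{..c}"] closedin_continuous_map_preimage[OF assms, of "{c..}"]
    closedin_continuous_map_preimage[OF assms, of "{c}"]
  by simp_all

definition rat_poly :: "rat list \<Rightarrow> real \<Rightarrow> real" where
  "rat_poly qs x = (\<Sum>i<length qs. real_of_rat (qs ! i) * x ^ i)"

lemma continuous_on_rat_poly: "continuous_on S (rat_poly qs)"
  unfolding rat_poly_def by (intro continuous_intros)

lemma rat_poly_approx_real_poly:
  fixes a :: "nat \<Rightarrow> real"
  assumes R: "\<And>x. x \<in> S \<Longrightarrow> \<bar>x\<bar> \<le> R" "1 \<le> R" and "0 < e"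
  shows "\<exists>qs. \<forall>x\<in>S. \<bar>(\<Sum>i\<le>n. a i * x ^ i) - rat_poly qs x\<bar> \<le> e"
proof -
  define \<delta> where "\<delta> = e / ((real n + 1) * R ^ n)"
  have "0 < (real n + 1) * R ^ n"
    using R(2) by (simp add: add_pos_nonneg)
  with \<open>0 < e\<close> R(2) have "0 < \<delta>" and e_eq: "e = ((real n + 1) * R ^ n) * \<delta>"
    by (simp_all add: \<delta>_def)
  have "\<exists>q. \<bar>a i - real_of_rat q\<bar> < \<delta>" for i
  proof -
    obtain r where "r \<in> \<rat>" "a i - \<delta> < r" "r < a i + \<delta>"
      using Rats_dense_in_real[of "a i - \<delta>" "a i + \<delta>"] \<open>0 < \<delta>\<close> by auto
    then obtain q where "a i - \<delta> < real_of_rat q" "real_of_rat q < a i + \<delta>"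
      by (auto elim: Rats_cases)
    then show ?thesis
      by (intro exI[of _ q]) (simp add: abs_less_iff)
  qed
  then obtain q where q: "\<And>i. \<bar>a i - real_of_rat (q i)\<bar> < \<delta>"
    by metis
  define qs where "qs = map q [0..<Suc n]"
  have rat_poly_qs: "rat_poly qs x = (\<Sum>i\<le>n. real_of_rat (q i) * x ^ i)" for x
    unfolding rat_poly_def qs_def lessThan_Suc_atMost[symmetric]
    by (intro sum.cong) (auto simp del: upt_Suc)
  have "\<bar>(\<Sum>i\<le>n. a i * x ^ i) - rat_poly qs x\<bar> \<le> e" if x: "x \<in> S" for x
  proof -
    have "\<bar>(\<Sum>i\<le>n. a i * x ^ i) - rat_poly qs x\<bar> \<le> (\<Sum>i\<le>n. \<bar>a i - real_of_rat (q i)\<bar> * \<bar>x\<bar> ^ i)"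
      unfolding rat_poly_qs sum_subtractf[symmetric] left_diff_distrib[symmetric]
      by (rule order_trans[OF sum_abs]) (simp add: abs_mult power_abs)
    also have "\<dots> \<le> (\<Sum>i\<le>n. \<delta> * R ^ n)"
    proof (rule sum_mono)
      fix i assume "i \<in> {..n}"
      then have "\<bar>x\<bar> ^ i \<le> R ^ n"
        using R x by (meson atMost_iff abs_ge_zero order_trans power_increasing power_mono)
      then show "\<bar>a i - real_of_rat (q i)\<bar> * \<bar>x\<bar> ^ i \<le> \<delta> * R ^ n"
        using q[of i] by (intro mult_mono) auto
    qed
    also have "\<dots> = e"
      by (simp add: e_eq)
    finally show ?thesis .
  qed
  then show ?thesis
    by blast
qed

lemma rat_poly_dense:
  fixes f :: "real \<Rightarrow> real"
  assumes "compact S" and "continuous_on S f" and "e > 0"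
  obtains qs where "\<And>x. x \<in> S \<Longrightarrow> \<bar>f x - rat_poly qs x\<bar> < e"
proof -
  obtain g where g: "real_polynomial_function g" "\<And>x. x \<in> S \<Longrightarrow> \<bar>f x - g x\<bar> < e / 2"
    using Stone_Weierstrass_real_polynomial_function[OF assms(1,2), of "e / 2"] assms(3) by auto
  then obtain a n where g_eq: "g = (\<lambda>x. \<Sum>i\<le>n. a i * x ^ i)"
    using real_polynomial_function_iff_sum by blast
  obtain R0 where "\<And>x. x \<in> S \<Longrightarrow> \<bar>x\<bar> \<le> R0"
    using compact_imp_bounded[OF assms(1)] unfolding bounded_iff by auto
  then have "\<And>x. x \<in> S \<Longrightarrow> \<bar>x\<bar> \<le> max 1 R0" "1 \<le> max 1 R0"
    by (auto simp: le_max_iff_disj)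
  then obtain qs where qs: "\<forall>x\<in>S. \<bar>g x - rat_poly qs x\<bar> \<le> e / 2"
    using rat_poly_approx_real_poly[of S "max 1 R0" "e / 2" a n] assms(3) unfolding g_eq by auto
  have "\<bar>f x - rat_poly qs x\<bar> < e" if "x \<in> S" for x
  proof -
    have "\<bar>g x - rat_poly qs x\<bar> \<le> e / 2"
      using qs that by blast
    with g(2)[OF that] show ?thesis
      by linarith
  qed
  then show thesis
    using that by blast
qed

definition cont_0M :: "real \<Rightarrow> (real \<Rightarrow> real) set" where
  "cont_0M M = {f. continuous_on {0..M} f}"

definition integrals_0M :: "real \<Rightarrow> real measure \<Rightarrow> (real \<Rightarrow> real) \<Rightarrow> real" where
  "integrals_0M M \<mu> = restrict (\<lambda>f. integral\<^sup>L \<mu> f) (cont_0M M)"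

lemma weak_top_eq_pullback:
  "weak_top M = pullback_topology (probs_0M M) (integrals_0M M) (product_topology (\<lambda>_. euclideanreal) (cont_0M M))"
  unfolding weak_top_def integrals_0M_def cont_0M_def ..

lemma topspace_weak_top: "topspace (weak_top M) = probs_0M M"
  unfolding weak_top_eq_pullback topspace_pullback_topology integrals_0M_def by auto

lemma prob_space_probs_0M: "\<mu> \<in> probs_0M M \<Longrightarrow> prob_space \<mu>"
  unfolding probs_0M_def by simp

lemma space_probs_0M: "\<mu> \<in> probs_0M M \<Longrightarrow> space \<mu> = {0..M}"
  unfolding probs_0M_def borel_0M_def by (auto dest: sets_eq_imp_space_eq simp: space_restrict_space)

lemma borel_measurable_probs_0M:
  assumes "\<mu> \<in> probs_0M M" and "f \<in> borel_measurable (restrict_space borel {0..M})"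
  shows "f \<in> borel_measurable \<mu>"
  using assms measurable_cong_sets unfolding probs_0M_def borel_0M_def by blast

lemma integrable_probs_0M:
  fixes f :: "real \<Rightarrow> real"
  assumes \<mu>: "\<mu> \<in> probs_0M M" and f: "continuous_on {0..M} f"
  shows "integrable \<mu> f"
proof -
  interpret prob_space \<mu>
    using \<mu> by (rule prob_space_probs_0M)
  obtain B where "\<forall>x\<in>{0..M}. norm (f x) \<le> B"
    using compact_imp_bounded[OF compact_continuous_image[OF f compact_Icc]] unfolding bounded_iff by auto
  then show ?thesis
    using \<mu> f by (intro integrable_const_bound[where B=B])
      (auto simp: space_probs_0M intro: borel_measurable_probs_0M borel_measurable_continuous_on_restrict)
qed

lemma abs_integral_probs_0M_le:
  fixes f :: "real \<Rightarrow> real"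
  assumes \<mu>: "\<mu> \<in> probs_0M M" and f: "continuous_on {0..M} f" and B: "\<And>x. x \<in> {0..M} \<Longrightarrow> \<bar>f x\<bar> \<le> B"
  shows "\<bar>integral\<^sup>L \<mu> f\<bar> \<le> B"
proof -
  interpret prob_space \<mu>
    using \<mu> by (rule prob_space_probs_0M)
  have "\<bar>integral\<^sup>L \<mu> f\<bar> \<le> integral\<^sup>L \<mu> (\<lambda>x. \<bar>f x\<bar>)"
    using integral_norm_bound[of \<mu> f] by simp
  also have "\<dots> \<le> integral\<^sup>L \<mu> (\<lambda>x. B)"
    using B integrable_probs_0M[OF \<mu> f] by (intro integral_mono) (auto simp: space_probs_0M[OF \<mu>])
  finally show ?thesis
    by (simp add: prob_space)
qed

lemma abs_integral_diff_probs_0M_le: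
  fixes f g :: "real \<Rightarrow> real"
  assumes \<mu>: "\<mu> \<in> probs_0M M" and "continuous_on {0..M} f" "continuous_on {0..M} g"
    and "\<And>x. x \<in> {0..M} \<Longrightarrow> \<bar>f x - g x\<bar> \<le> e"
  shows "\<bar>integral\<^sup>L \<mu> f - integral\<^sup>L \<mu> g\<bar> \<le> e"
  using abs_integral_probs_0M_le[OF \<mu>, of "\<lambda>x. f x - g x" e] assms
  by (simp add: continuous_on_diff integrable_probs_0M)

lemma nn_integral_probs_0M_eq_integral:
  fixes f :: "real \<Rightarrow> real"
  assumes \<mu>: "\<mu> \<in> probs_0M M" and f: "continuous_on {0..M} f" and "\<And>x. x \<in> {0..M} \<Longrightarrow> 0 \<le> f x"
  shows "(\<integral>\<^sup>+ x. ennreal (f x) \<partial>\<mu>) = ennreal (integral\<^sup>L \<mu> f)"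
  using assms by (intro nn_integral_eq_integral integrable_probs_0M AE_I2) (auto simp: space_probs_0M)

lemma continuous_map_integral_weak_top:
  fixes f :: "real \<Rightarrow> real"
  assumes "continuous_on {0..M} f"
  shows "continuous_map (weak_top M) euclideanreal (\<lambda>\<mu>. integral\<^sup>L \<mu> f)"
proof -
  have "f \<in> cont_0M M"
    using assms by (simp add: cont_0M_def)
  then have "continuous_map (weak_top M) euclideanreal ((\<lambda>h. h f) \<circ> integrals_0M M)"
    unfolding weak_top_eq_pullback by (intro continuous_map_pullback continuous_map_product_projection)
  moreover have "(\<lambda>h. h f) \<circ> integrals_0M M = (\<lambda>\<mu>. integral\<^sup>L \<mu> f)"
    using \<open>f \<in> cont_0M M\<close> by (auto simp: integrals_0M_def)
  ultimately show ?thesis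
    by simp
qed

definition sup_norm_0M :: "real \<Rightarrow> (real \<Rightarrow> real) \<Rightarrow> real" where
  "sup_norm_0M M f = (SUP x\<in>{0..M}. \<bar>f x\<bar>)"

lemma abs_le_sup_norm_0M:
  assumes "continuous_on {0..M} f" and "x \<in> {0..M}"
  shows "\<bar>f x\<bar> \<le> sup_norm_0M M f"
proof -
  have "bounded ((\<lambda>x. \<bar>f x\<bar>) ` {0..M})"
    using assms(1) by (intro compact_imp_bounded compact_continuous_image continuous_intros) auto
  then show ?thesis
    unfolding sup_norm_0M_def using assms(2) by (intro cSUP_upper bounded_imp_bdd_above)
qed

lemma integrals_0M_image_subset:
  "integrals_0M M ` probs_0M M \<subseteq> (\<Pi>\<^sub>E f\<in>cont_0M M. {- sup_norm_0M M f .. sup_norm_0M M f})"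
proof
  fix h assume "h \<in> integrals_0M M ` probs_0M M"
  then obtain \<mu> where \<mu>: "\<mu> \<in> probs_0M M" "h = integrals_0M M \<mu>"
    by blast
  have "\<bar>integral\<^sup>L \<mu> f\<bar> \<le> sup_norm_0M M f" if "f \<in> cont_0M M" for f
    using that by (intro abs_integral_probs_0M_le[OF \<mu>(1)] abs_le_sup_norm_0M) (auto simp: cont_0M_def)
  then show "h \<in> (\<Pi>\<^sub>E f\<in>cont_0M M. {- sup_norm_0M M f .. sup_norm_0M M f})"
    using \<mu>(2) by (auto simp: integrals_0M_def abs_le_iff minus_le_iff)
qed

lemma closure_integrals_0M_approx:
  assumes L: "L \<in> product_topology (\<lambda>_. euclideanreal) (cont_0M M) closure_of (integrals_0M M ` probs_0M M)"
    and G: "finite G" "G \<subseteq> cont_0M M" and "\<delta> > 0"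
  shows "\<exists>\<mu>\<in>probs_0M M. \<forall>g\<in>G. \<bar>integral\<^sup>L \<mu> g - L g\<bar> < \<delta>"
proof -
  let ?X = "product_topology (\<lambda>_. euclideanreal) (cont_0M M)"
  define T where "T = \<Inter>(insert (topspace ?X) ((\<lambda>g. {h \<in> topspace ?X. h g \<in> ball (L g) \<delta>}) ` G))"
  have "openin ?X {h \<in> topspace ?X. h g \<in> ball (L g) \<delta>}" if "g \<in> G" for g
    using that G by (intro openin_continuous_map_preimage[OF continuous_map_product_projection]) auto
  then have "\<forall>S \<in> insert (topspace ?X) ((\<lambda>g. {h \<in> topspace ?X. h g \<in> ball (L g) \<delta>}) ` G). openin ?X S"
    by blast
  then have "openin ?X T"
    unfolding T_def using G by (intro openin_Inter) auto
  moreover have "L \<in> T"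
    using L \<open>\<delta> > 0\<close> by (auto simp: T_def in_closure_of)
  ultimately obtain \<mu> where \<mu>: "\<mu> \<in> probs_0M M" "integrals_0M M \<mu> \<in> T"
    using L unfolding in_closure_of by blast
  have "\<bar>integral\<^sup>L \<mu> g - L g\<bar> < \<delta>" if "g \<in> G" for g
  proof -
    have "integrals_0M M \<mu> g \<in> ball (L g) \<delta>"
      using \<mu>(2) that unfolding T_def by blast
    then show ?thesis
      using that G by (auto simp: integrals_0M_def dist_real_def abs_minus_commute)
  qed
  with \<mu>(1) show ?thesis
    by blast
qed

lemma closure_integrals_0M_dist_le:
  assumes L: "L \<in> product_topology (\<lambda>_. euclideanreal) (cont_0M M) closure_of (integrals_0M M ` probs_0M M)"
    and fg: "f \<in> cont_0M M" "g \<in> cont_0M M" and e: "\<And>x. x \<in> {0..M} \<Longrightarrow> \<bar>f x - g x\<bar> \<le> e"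
  shows "\<bar>L f - L g\<bar> \<le> e"
proof (rule field_le_epsilon)
  fix \<delta> :: real assume "\<delta> > 0"
  then have "\<exists>\<mu>\<in>probs_0M M. \<forall>h\<in>{f, g}. \<bar>integral\<^sup>L \<mu> h - L h\<bar> < \<delta> / 2"
    using fg by (intro closure_integrals_0M_approx[OF L]) auto
  then obtain \<mu> where \<mu>: "\<mu> \<in> probs_0M M" "\<And>h. h \<in> {f, g} \<Longrightarrow> \<bar>integral\<^sup>L \<mu> h - L h\<bar> < \<delta> / 2"
    by blast
  moreover have "\<bar>integral\<^sup>L \<mu> f - integral\<^sup>L \<mu> g\<bar> \<le> e"
    using fg e by (intro abs_integral_diff_probs_0M_le[OF \<mu>(1)]) (auto simp: cont_0M_def)
  ultimately have "\<bar>integral\<^sup>L \<mu> f - L f\<bar> < \<delta> / 2" "\<bar>integral\<^sup>L \<mu> g - L g\<bar> < \<delta> / 2"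
    "\<bar>integral\<^sup>L \<mu> f - integral\<^sup>L \<mu> g\<bar> \<le> e"
    by auto
  then show "\<bar>L f - L g\<bar> \<le> e + \<delta>"
    by linarith
qed

lemma tight_probs_0M:
  fixes \<mu>s :: "nat \<Rightarrow> real measure"
  assumes M: "M \<ge> 0" and \<mu>s: "\<And>n. \<mu>s n \<in> probs_0M M"
  shows "tight (\<lambda>n. distr (\<mu>s n) borel (\<lambda>x. x))"
proof -
  have id_meas: "(\<lambda>x. x) \<in> borel_measurable (\<mu>s n)" for n
    by (rule borel_measurable_probs_0M[OF \<mu>s borel_measurable_continuous_on_restrict[OF continuous_on_id]])
  have "real_distribution (distr (\<mu>s n) borel (\<lambda>x. x))" for n
  proof -
    interpret prob_space "\<mu>s n"
      using \<mu>s by (rule prob_space_probs_0M)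
    show ?thesis
      by (intro real_distribution.intro real_distribution_axioms.intro prob_space_distr id_meas) simp
  qed
  moreover have "measure (distr (\<mu>s n) borel (\<lambda>x. x)) {-1<..M} = 1" for n
  proof -
    interpret prob_space "\<mu>s n"
      using \<mu>s by (rule prob_space_probs_0M)
    have "(\<lambda>x. x) -` {-1<..M} \<inter> space (\<mu>s n) = space (\<mu>s n)"
      by (auto simp: space_probs_0M[OF \<mu>s])
    then show ?thesis
      by (simp add: measure_distr[OF id_meas] prob_space)
  qed
  ultimately show ?thesis
    using M unfolding tight_def by (intro conjI allI impI exI[of _ "-1"] exI[of _ M]) auto
qed

lemma integral_probs_0M_eq_clamp:
  fixes f :: "real \<Rightarrow> real"
  assumes \<mu>: "\<mu> \<in> probs_0M M" and f: "continuous_on {0..M} f"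
  shows "integral\<^sup>L \<mu> f = integral\<^sup>L (distr \<mu> borel (\<lambda>x. x)) (\<lambda>x. f (clamp 0 M x))"
proof -
  have id_meas: "(\<lambda>x. x) \<in> borel_measurable \<mu>"
    by (rule borel_measurable_probs_0M[OF \<mu> borel_measurable_continuous_on_restrict[OF continuous_on_id]])
  have "continuous_on UNIV (\<lambda>x. f (clamp 0 M x))"
    using f by (intro clamp_continuous_on) simp
  then have meas: "(\<lambda>x. f (clamp 0 M x)) \<in> borel_measurable borel"
    by (rule borel_measurable_continuous_onI)
  have "integral\<^sup>L \<mu> f = integral\<^sup>L \<mu> (\<lambda>x. f (clamp 0 M x))"
    by (intro Bochner_Integration.integral_cong) (auto simp: space_probs_0M[OF \<mu>])
  also have "\<dots> = integral\<^sup>L (distr \<mu> borel (\<lambda>x. x)) (\<lambda>x. f (clamp 0 M x))"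
    by (simp add: integral_distr id_meas meas)
  finally show ?thesis .
qed

lemma probs_0M_weakly_convergent_subseq:
  fixes \<mu>s :: "nat \<Rightarrow> real measure"
  assumes M: "M \<ge> 0" and \<mu>s: "\<And>n. \<mu>s n \<in> probs_0M M"
  obtains r \<mu> where "strict_mono r" "\<mu> \<in> probs_0M M"
    "\<And>f :: real \<Rightarrow> real. continuous_on {0..M} f \<Longrightarrow> (\<lambda>n. integral\<^sup>L (\<mu>s (r n)) f) \<longlonglongrightarrow> integral\<^sup>L \<mu> f"
proof -
  \<comment> \<open>Helly's theorem is about measures on the real line: push forward, select a subsequence, and
    push the limit back onto \<open>[0,M]\<close> by clamping.\<close>
  define \<nu> where "\<nu> n = distr (\<mu>s n) borel (\<lambda>x. x)" for n :: nat
  have "tight \<nu>"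
    unfolding \<nu>_def by (rule tight_probs_0M[OF M \<mu>s])
  then have \<nu>_distr: "real_distribution (\<nu> n)" for n
    by (simp add: tight_def)
  obtain r \<nu>0 where r: "strict_mono r" and \<nu>0: "real_distribution \<nu>0"
    and conv: "weak_conv_m (\<lambda>n. \<nu> (r n)) \<nu>0"
    using tight_imp_convergent_subsubsequence[OF \<open>tight \<nu>\<close>, of id] by (auto simp: strict_mono_def o_def)
  interpret \<nu>0: real_distribution \<nu>0
    by (rule \<nu>0)
  have clamp_in: "clamp 0 M x \<in> {0..M}" for x :: real
    using clamp_in_interval[of 0 M x] M by simp
  have clamp_meas: "clamp 0 M \<in> measurable \<nu>0 (borel_0M M)"
    unfolding borel_0M_def measurable_cong_sets[OF \<nu>0.events_eq_borel refl] using clamp_in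
    by (intro measurable_restrict_space2 borel_measurable_continuous_onI clamp_continuous_on continuous_on_id) auto
  define \<mu> where "\<mu> = distr \<nu>0 (borel_0M M) (clamp 0 M)"
  have "\<mu> \<in> probs_0M M"
    unfolding probs_0M_def \<mu>_def using \<nu>0.prob_space_distr[OF clamp_meas] by simp
  moreover have "(\<lambda>n. integral\<^sup>L (\<mu>s (r n)) f) \<longlonglongrightarrow> integral\<^sup>L \<mu> f"
    if f: "continuous_on {0..M} f" for f :: "real \<Rightarrow> real"
  proof -
    have "bounded (range (\<lambda>x. f (clamp 0 M x)))"
      using f by (intro clamp_bounded compact_imp_bounded compact_continuous_image) auto
    then obtain B where "\<And>x. norm (f (clamp 0 M x)) \<le> B"
      unfolding bounded_iff by auto
    moreover have "isCont (\<lambda>x. f (clamp 0 M x)) x" for x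
      using f clamp_continuous_at[of 0 M f x] by simp
    ultimately have "(\<lambda>n. integral\<^sup>L (\<nu> (r n)) (\<lambda>x. f (clamp 0 M x))) \<longlonglongrightarrow> integral\<^sup>L \<nu>0 (\<lambda>x. f (clamp 0 M x))"
      using \<nu>_distr \<nu>0 conv by (intro weak_conv_imp_integral_bdd_continuous_conv) auto
    moreover have "integral\<^sup>L \<mu> f = integral\<^sup>L \<nu>0 (\<lambda>x. f (clamp 0 M x))"
      unfolding \<mu>_def using f
      by (intro integral_distr clamp_meas) (simp add: borel_0M_def borel_measurable_continuous_on_restrict)
    ultimately show ?thesis
      using integral_probs_0M_eq_clamp[OF \<mu>s f] by (simp add: \<nu>_def)
  qed
  ultimately show thesis
    by (rule that[OF r])
qed

lemma closure_integrals_0M_LIMSEQ: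
  fixes d :: "nat \<Rightarrow> real \<Rightarrow> real"
  assumes L: "L \<in> product_topology (\<lambda>_. euclideanreal) (cont_0M M) closure_of (integrals_0M M ` probs_0M M)"
    and d: "\<And>j. d j \<in> cont_0M M"
  obtains \<mu>s where "\<And>n. \<mu>s n \<in> probs_0M M" "\<And>j. (\<lambda>n. integral\<^sup>L (\<mu>s n) (d j)) \<longlonglongrightarrow> L (d j)"
proof -
  have "\<forall>n. \<exists>\<mu>\<in>probs_0M M. \<forall>g\<in>d ` {..n}. \<bar>integral\<^sup>L \<mu> g - L g\<bar> < 1 / real (Suc n)"
    using d by (intro allI closure_integrals_0M_approx[OF L]) auto
  then have "\<exists>\<mu>s. \<forall>n. \<mu>s n \<in> probs_0M M \<and> (\<forall>g\<in>d ` {..n}. \<bar>integral\<^sup>L (\<mu>s n) g - L g\<bar> < 1 / real (Suc n))"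
    by (subst choice_iff[symmetric]) blast
  then obtain \<mu>s where "\<forall>n. \<mu>s n \<in> probs_0M M \<and> (\<forall>g\<in>d ` {..n}. \<bar>integral\<^sup>L (\<mu>s n) g - L g\<bar> < 1 / real (Suc n))"
    by blast
  then have \<mu>s: "\<And>n. \<mu>s n \<in> probs_0M M"
    and approx: "\<And>n j. j \<le> n \<Longrightarrow> \<bar>integral\<^sup>L (\<mu>s n) (d j) - L (d j)\<bar> < 1 / real (Suc n)"
    by auto
  have "(\<lambda>n. integral\<^sup>L (\<mu>s n) (d j)) \<longlonglongrightarrow> L (d j)" for j
  proof -
    have "(\<lambda>n. integral\<^sup>L (\<mu>s (n + j)) (d j) - L (d j)) \<longlonglongrightarrow> 0"
    proof (rule LIMSEQ_norm_0)
      fix n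
      have "1 / real (Suc (n + j)) \<le> 1 / real (Suc n)"
        by (simp add: frac_le)
      then show "norm (integral\<^sup>L (\<mu>s (n + j)) (d j) - L (d j)) < 1 / real (Suc n)"
        using approx[of j "n + j"] by (simp only: real_norm_def) linarith
    qed
    then have "(\<lambda>n. integral\<^sup>L (\<mu>s (n + j)) (d j)) \<longlonglongrightarrow> L (d j)"
      by (rule LIM_zero_cancel)
    then show ?thesis
      by (rule LIMSEQ_offset)
  qed
  with \<mu>s show thesis
    by (rule that)
qed

lemma closure_integrals_0M_eqI:
  assumes L: "L \<in> product_topology (\<lambda>_. euclideanreal) (cont_0M M) closure_of (integrals_0M M ` probs_0M M)"
    and \<mu>: "\<mu> \<in> probs_0M M" and agree: "\<And>qs. L (rat_poly qs) = integral\<^sup>L \<mu> (rat_poly qs)"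
  shows "L = integrals_0M M \<mu>"
proof (rule extensionalityI)
  have "L \<in> topspace (product_topology (\<lambda>_. euclideanreal) (cont_0M M))"
    using L unfolding in_closure_of by blast
  then show "L \<in> extensional (cont_0M M)"
    by (simp add: PiE_iff)
  show "integrals_0M M \<mu> \<in> extensional (cont_0M M)"
    by (simp add: integrals_0M_def)
next
  fix f assume f: "f \<in> cont_0M M"
  have "\<bar>L f - integral\<^sup>L \<mu> f\<bar> \<le> 0 + e" if "e > 0" for e
  proof -
    obtain qs where qs: "\<And>x. x \<in> {0..M} \<Longrightarrow> \<bar>f x - rat_poly qs x\<bar> < e / 2"
      using rat_poly_dense[of "{0..M}" f "e / 2"] f \<open>e > 0\<close> by (auto simp: cont_0M_def)
    have "\<bar>L f - L (rat_poly qs)\<bar> \<le> e / 2"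
      using qs f by (intro closure_integrals_0M_dist_le[OF L]) (auto simp: cont_0M_def continuous_on_rat_poly less_imp_le)
    moreover have "\<bar>integral\<^sup>L \<mu> f - integral\<^sup>L \<mu> (rat_poly qs)\<bar> \<le> e / 2"
      using qs f by (intro abs_integral_diff_probs_0M_le[OF \<mu>]) (auto simp: cont_0M_def continuous_on_rat_poly less_imp_le)
    ultimately show ?thesis
      using agree[of qs] by linarith
  qed
  then show "L f = integrals_0M M \<mu> f"
    using f field_le_epsilon[of "\<bar>L f - integral\<^sup>L \<mu> f\<bar>" 0] by (simp add: integrals_0M_def)
qed

lemma closedin_integrals_0M_image:
  assumes M: "M \<ge> 0"
  shows "closedin (product_topology (\<lambda>_. euclideanreal) (cont_0M M)) (integrals_0M M ` probs_0M M)"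
proof -
  let ?X = "product_topology (\<lambda>_. euclideanreal) (cont_0M M)"
  have "L \<in> integrals_0M M ` probs_0M M" if L: "L \<in> ?X closure_of (integrals_0M M ` probs_0M M)" for L
  proof -
    \<comment> \<open>The polynomials with rational coefficients are countable and dense.\<close>
    define d where "d j = rat_poly (from_nat j)" for j
    have d: "d j \<in> cont_0M M" for j
      by (simp add: d_def cont_0M_def continuous_on_rat_poly)
    obtain \<mu>s where \<mu>s: "\<And>n. \<mu>s n \<in> probs_0M M" and lim: "\<And>j. (\<lambda>n. integral\<^sup>L (\<mu>s n) (d j)) \<longlonglongrightarrow> L (d j)"
      by (rule closure_integrals_0M_LIMSEQ[OF L d]) (rule that)
    obtain r \<mu> where r: "strict_mono r" and \<mu>: "\<mu> \<in> probs_0M M"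
      and conv: "\<And>f :: real \<Rightarrow> real. continuous_on {0..M} f \<Longrightarrow> (\<lambda>n. integral\<^sup>L (\<mu>s (r n)) f) \<longlonglongrightarrow> integral\<^sup>L \<mu> f"
      by (rule probs_0M_weakly_convergent_subseq[OF M \<mu>s]) (rule that)
    have L_d: "L (d j) = integral\<^sup>L \<mu> (d j)" for j
    proof (rule LIMSEQ_unique)
      show "(\<lambda>n. integral\<^sup>L (\<mu>s (r n)) (d j)) \<longlonglongrightarrow> L (d j)"
        using LIMSEQ_subseq_LIMSEQ[OF lim r] by (simp add: o_def)
      show "(\<lambda>n. integral\<^sup>L (\<mu>s (r n)) (d j)) \<longlonglongrightarrow> integral\<^sup>L \<mu> (d j)"
        using conv d[of j] by (simp add: cont_0M_def)
    qed
    have "L (rat_poly qs) = integral\<^sup>L \<mu> (rat_poly qs)" for qs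
      using L_d[of "to_nat qs"] by (simp add: d_def)
    with L \<mu> have "L = integrals_0M M \<mu>"
      by (rule closure_integrals_0M_eqI)
    with \<mu> show ?thesis
      by blast
  qed
  moreover have "integrals_0M M ` probs_0M M \<subseteq> topspace ?X"
    by (auto simp: integrals_0M_def)
  ultimately show ?thesis
    unfolding closure_of_subset_eq[symmetric] by blast
qed

lemma compact_space_weak_top:
  assumes "M \<ge> 0"
  shows "compact_space (weak_top M)"
proof -
  have "compactin (product_topology (\<lambda>_. euclideanreal) (cont_0M M)) (integrals_0M M ` probs_0M M)"
    by (rule closed_compactin[OF _ integrals_0M_image_subset closedin_integrals_0M_image[OF assms]])
       (simp add: compactin_PiE)
  then have "compactin (weak_top M) (probs_0M M)"
    unfolding weak_top_eq_pullback by (rule compactin_pullback_topology[OF order_refl])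
  then show ?thesis
    by (simp add: compact_space_def topspace_weak_top)
qed

definition trunc_inv_pow :: "nat \<Rightarrow> nat \<Rightarrow> real \<Rightarrow> real" where
  "trunc_inv_pow k n t = 1 / max t (1 / (real n + 1)) ^ (k + 1)"

lemma trunc_inv_pow_pos: "0 < trunc_inv_pow k n t"
proof -
  have "0 < max t (1 / (real n + 1))"
    by (simp add: less_max_iff_disj)
  then show ?thesis
    by (simp add: trunc_inv_pow_def)
qed

lemma trunc_inv_pow_nonneg: "0 \<le> trunc_inv_pow k n t"
  using trunc_inv_pow_pos less_imp_le by blast

lemma continuous_on_trunc_inv_pow: "continuous_on S (trunc_inv_pow k n)"
proof -
  have "max t (1 / (real n + 1)) ^ (k + 1) \<noteq> 0" for t
  proof -
    have "0 < max t (1 / (real n + 1))"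
      by (simp add: less_max_iff_disj)
    then show ?thesis
      by simp
  qed
  then show ?thesis
    unfolding trunc_inv_pow_def by (intro continuous_intros) auto
qed

lemma trunc_inv_pow_mono:
  assumes "n \<le> n'"
  shows "trunc_inv_pow k n t \<le> trunc_inv_pow k n' t"
proof -
  have "1 / (real n' + 1) \<le> 1 / (real n + 1)"
    using assms by (simp add: frac_le)
  then have "max t (1 / (real n' + 1)) ^ (k + 1) \<le> max t (1 / (real n + 1)) ^ (k + 1)"
    by (intro power_mono) (auto simp: le_max_iff_disj)
  moreover have "0 < max t (1 / (real n' + 1)) ^ (k + 1)"
    by (simp add: less_max_iff_disj)
  ultimately show ?thesis
    unfolding trunc_inv_pow_def by (intro frac_le) auto
qed

lemma trunc_inv_pow_le: "trunc_inv_pow k n t \<le> (real n + 1) ^ (k + 1)"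
proof -
  have "(1 / (real n + 1)) ^ (k + 1) \<le> max t (1 / (real n + 1)) ^ (k + 1)"
    by (intro power_mono) auto
  then have "trunc_inv_pow k n t \<le> 1 / (1 / (real n + 1)) ^ (k + 1)"
    unfolding trunc_inv_pow_def by (intro frac_le) auto
  then show ?thesis
    by (simp add: power_one_over)
qed

lemma trunc_inv_pow_le_inv:
  assumes "0 < t"
  shows "trunc_inv_pow k n t \<le> 1 / t ^ (k + 1)"
proof -
  have "t ^ (k + 1) \<le> max t (1 / (real n + 1)) ^ (k + 1)"
    using assms by (intro power_mono) auto
  then show ?thesis
    unfolding trunc_inv_pow_def using assms by (intro frac_le) auto
qed

lemma trunc_inv_pow_eq: "1 / (real n + 1) \<le> t \<Longrightarrow> trunc_inv_pow k n t = 1 / t ^ (k + 1)"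
  by (simp add: trunc_inv_pow_def max_def)

lemma SUP_trunc_inv_pow:
  assumes "0 \<le> t"
  shows "(SUP n. ennreal (trunc_inv_pow k n t)) = inv_pow k t"
proof (cases "t = 0")
  case True
  have "real n \<le> trunc_inv_pow k n t" for n
  proof -
    have "real n + 1 \<le> (real n + 1) ^ (k + 1)"
      by (rule self_le_power) auto
    then have "real n \<le> (real n + 1) ^ (k + 1)"
      by linarith
    then show ?thesis
      using True by (simp add: trunc_inv_pow_def power_one_over)
  qed
  then have "(SUP n. ennreal (trunc_inv_pow k n t)) = top"
    by (intro ennreal_SUP_eq_top) (auto simp: ennreal_of_nat_eq_real_of_nat intro: ennreal_leI)
  with True show ?thesis
    by (simp add: inv_pow_def)
next
  case False
  with assms have "0 < t"
    by simp
  then obtain n0 where "inverse (real (Suc n0)) < t"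
    using reals_Archimedean by blast
  then have n0: "1 / (real n0 + 1) \<le> t"
    by (simp add: inverse_eq_divide add.commute)
  have "(SUP n. ennreal (trunc_inv_pow k n t)) = ennreal (1 / t ^ (k + 1))"
  proof (rule antisym)
    show "(SUP n. ennreal (trunc_inv_pow k n t)) \<le> ennreal (1 / t ^ (k + 1))"
      using trunc_inv_pow_le_inv[OF \<open>0 < t\<close>] by (intro SUP_least ennreal_leI)
    show "ennreal (1 / t ^ (k + 1)) \<le> (SUP n. ennreal (trunc_inv_pow k n t))"
      using trunc_inv_pow_eq[OF n0, of k] by (metis SUP_upper UNIV_I)
  qed
  with False show ?thesis
    by (simp add: inv_pow_def)
qed

lemma inv_pow_le_trunc_inv_pow:
  assumes "0 \<le> t" and "k < \<kappa>"
  shows "inv_pow k t \<le> ennreal (trunc_inv_pow k n t) + ennreal (1 / (real n + 1) ^ (\<kappa> - k)) * inv_pow \<kappa> t"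
proof (cases "t = 0")
  case True
  then show ?thesis
    by (simp add: inv_pow_def ennreal_mult_top)
next
  case False
  with assms(1) have t: "0 < t"
    by simp
  then have inv_pow_t: "inv_pow k t = ennreal (1 / t ^ (k + 1))" "inv_pow \<kappa> t = ennreal (1 / t ^ (\<kappa> + 1))"
    by (auto simp: inv_pow_def)
  show ?thesis
  proof (cases "1 / (real n + 1) \<le> t")
    case True
    then show ?thesis
      by (simp add: inv_pow_t trunc_inv_pow_eq add_increasing2)
  next
    case False
    have "1 / t ^ (k + 1) = t ^ (\<kappa> - k) * (1 / t ^ (\<kappa> + 1))"
      using t assms(2) by (simp add: field_simps flip: power_add)
    also have "\<dots> \<le> (1 / (real n + 1)) ^ (\<kappa> - k) * (1 / t ^ (\<kappa> + 1))"
      using False t by (intro mult_right_mono power_mono) auto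
    finally have "inv_pow k t \<le> ennreal (1 / (real n + 1) ^ (\<kappa> - k)) * inv_pow \<kappa> t"
      using t by (simp add: inv_pow_t power_one_over ennreal_leI flip: ennreal_mult)
    then show ?thesis
      by (simp add: add_increasing)
  qed
qed

definition inv_moment_sum :: "nat set \<Rightarrow> (nat \<Rightarrow> real) \<Rightarrow> nat \<Rightarrow> (nat \<Rightarrow> real measure) \<Rightarrow> ennreal" where
  "inv_moment_sum B w k \<mu> = (\<Sum>i. if i \<in> B then ennreal (w i) * (\<integral>\<^sup>+ t. inv_pow k t \<partial>\<mu> i) else 0)"

definition trunc_inv_moment_sum :: "nat set \<Rightarrow> (nat \<Rightarrow> real) \<Rightarrow> nat \<Rightarrow> nat \<Rightarrow> nat \<Rightarrow> (nat \<Rightarrow> real measure) \<Rightarrow> real" where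
  "trunc_inv_moment_sum B w k n N \<mu> = (\<Sum>i<N. if i \<in> B then w i * integral\<^sup>L (\<mu> i) (trunc_inv_pow k n) else 0)"

lemma sum_trunc_inv_moment_terms:
  assumes \<mu>: "\<And>i. i \<in> B \<Longrightarrow> \<mu> i \<in> probs_0M M" and w: "\<And>i. 0 \<le> w i"
  shows "(\<Sum>i<N. if i \<in> B then ennreal (w i) * (\<integral>\<^sup>+ t. trunc_inv_pow k n t \<partial>\<mu> i) else 0)
    = ennreal (trunc_inv_moment_sum B w k n N \<mu>)"
proof -
  have integral_nonneg: "0 \<le> integral\<^sup>L (\<mu> i) (trunc_inv_pow k n)" for i
    by (intro Bochner_Integration.integral_nonneg trunc_inv_pow_nonneg)
  have "(\<integral>\<^sup>+ t. trunc_inv_pow k n t \<partial>\<mu> i) = ennreal (integral\<^sup>L (\<mu> i) (trunc_inv_pow k n))" if "i \<in> B" for i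
    using \<mu>[OF that] by (intro nn_integral_probs_0M_eq_integral continuous_on_trunc_inv_pow trunc_inv_pow_nonneg)
  then have "(if i \<in> B then ennreal (w i) * (\<integral>\<^sup>+ t. trunc_inv_pow k n t \<partial>\<mu> i) else 0)
      = ennreal (if i \<in> B then w i * integral\<^sup>L (\<mu> i) (trunc_inv_pow k n) else 0)" for i
    using w[of i] integral_nonneg[of i] by (simp add: ennreal_mult)
  moreover have "0 \<le> (if i \<in> B then w i * integral\<^sup>L (\<mu> i) (trunc_inv_pow k n) else 0)" for i
    using w[of i] integral_nonneg[of i] by simp
  ultimately show ?thesis
    unfolding trunc_inv_moment_sum_def by simp
qed

lemma trunc_inv_moment_sum_nonneg:
  "(\<And>i. 0 \<le> w i) \<Longrightarrow> 0 \<le> trunc_inv_moment_sum B w k n N \<mu>"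
  unfolding trunc_inv_moment_sum_def
  by (intro sum_nonneg) (auto intro!: mult_nonneg_nonneg Bochner_Integration.integral_nonneg trunc_inv_pow_nonneg)

lemma inv_moment_sum_eq_SUP:
  assumes \<mu>: "\<And>i. i \<in> B \<Longrightarrow> \<mu> i \<in> probs_0M M" and w: "\<And>i. 0 \<le> w i"
  shows "inv_moment_sum B w k \<mu> = (SUP n. SUP N. ennreal (trunc_inv_moment_sum B w k n N \<mu>))"
proof -
  define G where "G n i = (if i \<in> B then ennreal (w i) * (\<integral>\<^sup>+ t. trunc_inv_pow k n t \<partial>\<mu> i) else 0)" for n i
  have trunc_meas: "(\<lambda>t. ennreal (trunc_inv_pow k n t)) \<in> borel_measurable (\<mu> i)" if "i \<in> B" for n i
    using borel_measurable_probs_0M[OF \<mu>[OF that] borel_measurable_continuous_on_restrict[OF continuous_on_trunc_inv_pow]]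
    by measurable
  have "(if i \<in> B then ennreal (w i) * (\<integral>\<^sup>+ t. inv_pow k t \<partial>\<mu> i) else 0) = (SUP n. G n i)" for i
  proof (cases "i \<in> B")
    case True
    have "(\<integral>\<^sup>+ t. inv_pow k t \<partial>\<mu> i) = (\<integral>\<^sup>+ t. (SUP n. ennreal (trunc_inv_pow k n t)) \<partial>\<mu> i)"
      using SUP_trunc_inv_pow space_probs_0M[OF \<mu>[OF True]] by (intro nn_integral_cong) auto
    also have "\<dots> = (SUP n. \<integral>\<^sup>+ t. trunc_inv_pow k n t \<partial>\<mu> i)"
      using True trunc_meas
      by (intro nn_integral_monotone_convergence_SUP incseq_SucI)
         (auto simp: le_fun_def intro!: ennreal_leI trunc_inv_pow_mono)
    finally show ?thesis
      using True by (simp add: G_def SUP_mult_left_ennreal)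
  qed (simp add: G_def)
  then have "inv_moment_sum B w k \<mu> = (\<Sum>i. SUP n. G n i)"
    by (simp add: inv_moment_sum_def)
  also have "\<dots> = (SUP n. \<Sum>i. G n i)"
    by (intro ennreal_suminf_SUP_eq incseq_SucI)
       (auto simp: G_def intro!: mult_left_mono nn_integral_mono ennreal_leI trunc_inv_pow_mono)
  also have "\<dots> = (SUP n. SUP N. \<Sum>i<N. G n i)"
    by (simp add: suminf_eq_SUP)
  also have "\<dots> = (SUP n. SUP N. ennreal (trunc_inv_moment_sum B w k n N \<mu>))"
    by (simp add: G_def sum_trunc_inv_moment_terms[OF \<mu> w])
  finally show ?thesis .
qed

lemma inv_moment_sum_le_iff:
  assumes "\<And>i. i \<in> B \<Longrightarrow> \<mu> i \<in> probs_0M M" and "\<And>i. 0 \<le> w i" and "0 \<le> c"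
  shows "inv_moment_sum B w k \<mu> \<le> ennreal c \<longleftrightarrow> (\<forall>n N. trunc_inv_moment_sum B w k n N \<mu> \<le> c)"
  using assms by (simp add: inv_moment_sum_eq_SUP[OF assms(1,2)] SUP_le_iff)

lemma trunc_inv_moment_sum_le:
  assumes "\<And>i. i \<in> B \<Longrightarrow> \<mu> i \<in> probs_0M M" and "\<And>i. 0 \<le> w i"
  shows "ennreal (trunc_inv_moment_sum B w k n N \<mu>) \<le> inv_moment_sum B w k \<mu>"
proof -
  have "ennreal (trunc_inv_moment_sum B w k n N \<mu>) \<le> (SUP N. ennreal (trunc_inv_moment_sum B w k n N \<mu>))"
    by (rule SUP_upper) simp
  also have "\<dots> \<le> (SUP n. SUP N. ennreal (trunc_inv_moment_sum B w k n N \<mu>))"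
    by (rule SUP_upper[where f="\<lambda>n. SUP N. ennreal (trunc_inv_moment_sum B w k n N \<mu>)"]) simp
  also have "\<dots> = inv_moment_sum B w k \<mu>"
    by (rule inv_moment_sum_eq_SUP[OF assms, symmetric])
  finally show ?thesis .
qed

lemma nn_integral_inv_pow_le_trunc:
  assumes \<mu>: "\<mu> \<in> probs_0M M" and "k < \<kappa>"
  shows "(\<integral>\<^sup>+ t. inv_pow k t \<partial>\<mu>)
    \<le> (\<integral>\<^sup>+ t. trunc_inv_pow k n t \<partial>\<mu>) + ennreal (1 / (real n + 1) ^ (\<kappa> - k)) * (\<integral>\<^sup>+ t. inv_pow \<kappa> t \<partial>\<mu>)"
proof -
  have "trunc_inv_pow k n \<in> borel_measurable \<mu>"
    by (rule borel_measurable_probs_0M[OF \<mu> borel_measurable_continuous_on_restrict[OF continuous_on_trunc_inv_pow]])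
  then have meas_trunc: "(\<lambda>t. ennreal (trunc_inv_pow k n t)) \<in> borel_measurable \<mu>"
    by measurable
  have "inv_pow \<kappa> \<in> borel_measurable borel"
    unfolding inv_pow_def[abs_def] by measurable
  then have meas_inv_pow: "inv_pow \<kappa> \<in> borel_measurable \<mu>"
    by (rule borel_measurable_probs_0M[OF \<mu> measurable_restrict_space1])
  have "(\<integral>\<^sup>+ t. inv_pow k t \<partial>\<mu>)
      \<le> (\<integral>\<^sup>+ t. trunc_inv_pow k n t + ennreal (1 / (real n + 1) ^ (\<kappa> - k)) * inv_pow \<kappa> t \<partial>\<mu>)"
    using inv_pow_le_trunc_inv_pow[OF _ \<open>k < \<kappa>\<close>] space_probs_0M[OF \<mu>] by (intro nn_integral_mono) auto
  also have "\<dots> = (\<integral>\<^sup>+ t. trunc_inv_pow k n t \<partial>\<mu>) + ennreal (1 / (real n + 1) ^ (\<kappa> - k)) * (\<integral>\<^sup>+ t. inv_pow \<kappa> t \<partial>\<mu>)"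
    using meas_trunc meas_inv_pow by (simp add: nn_integral_add nn_integral_cmult)
  finally show ?thesis .
qed

lemma nn_integral_trunc_inv_pow_le:
  assumes "\<mu> \<in> probs_0M M"
  shows "(\<integral>\<^sup>+ t. trunc_inv_pow k n t \<partial>\<mu>) \<le> ennreal ((real n + 1) ^ (k + 1))"
proof -
  interpret prob_space \<mu>
    using assms by (rule prob_space_probs_0M)
  have "(\<integral>\<^sup>+ t. trunc_inv_pow k n t \<partial>\<mu>) \<le> (\<integral>\<^sup>+ t. (real n + 1) ^ (k + 1) \<partial>\<mu>)"
    by (intro nn_integral_mono ennreal_leI trunc_inv_pow_le)
  then show ?thesis
    by (simp add: emeasure_space_1)
qed

lemma inv_moment_sum_le_trunc:
  assumes \<mu>: "\<And>i. i \<in> B \<Longrightarrow> \<mu> i \<in> probs_0M M" and w: "\<And>i. 0 \<le> w i" and "k < \<kappa>"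
  shows "inv_moment_sum B w k \<mu> \<le> ennreal (trunc_inv_moment_sum B w k n N \<mu>)
    + ennreal ((real n + 1) ^ (k + 1)) * (\<Sum>i. ennreal (if i + N \<in> B then w (i + N) else 0))
    + ennreal (1 / (real n + 1) ^ (\<kappa> - k)) * inv_moment_sum B w \<kappa> \<mu>"
proof -
  define e where "e = ennreal (1 / (real n + 1) ^ (\<kappa> - k))"
  define F where "F j i = (if i \<in> B then ennreal (w i) * (\<integral>\<^sup>+ t. inv_pow j t \<partial>\<mu> i) else 0)" for j i
  define G where "G i = (if i \<in> B then ennreal (w i) * (\<integral>\<^sup>+ t. trunc_inv_pow k n t \<partial>\<mu> i) else 0)" for i
  have "F k i \<le> G i + e * F \<kappa> i" for i
  proof (cases "i \<in> B")
    case True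
    have "ennreal (w i) * (\<integral>\<^sup>+ t. inv_pow k t \<partial>\<mu> i)
        \<le> ennreal (w i) * ((\<integral>\<^sup>+ t. trunc_inv_pow k n t \<partial>\<mu> i) + e * (\<integral>\<^sup>+ t. inv_pow \<kappa> t \<partial>\<mu> i))"
      unfolding e_def by (intro mult_left_mono nn_integral_inv_pow_le_trunc[OF \<mu>[OF True] \<open>k < \<kappa>\<close>]) simp
    then show ?thesis
      using True by (simp add: F_def G_def distrib_left mult.left_commute)
  qed (simp add: F_def G_def)
  then have "inv_moment_sum B w k \<mu> \<le> (\<Sum>i. G i + e * F \<kappa> i)"
    unfolding inv_moment_sum_def F_def[symmetric] by (intro suminf_le) auto
  also have "\<dots> = (\<Sum>i. G i) + e * inv_moment_sum B w \<kappa> \<mu>"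
    by (simp add: inv_moment_sum_def F_def suminf_add[symmetric])
  finally have split: "inv_moment_sum B w k \<mu> \<le> (\<Sum>i. G i) + e * inv_moment_sum B w \<kappa> \<mu>" .
  have "G i \<le> ennreal ((real n + 1) ^ (k + 1)) * ennreal (if i \<in> B then w i else 0)" for i
  proof (cases "i \<in> B")
    case True
    then have "ennreal (w i) * (\<integral>\<^sup>+ t. trunc_inv_pow k n t \<partial>\<mu> i) \<le> ennreal (w i) * ennreal ((real n + 1) ^ (k + 1))"
      by (intro mult_left_mono nn_integral_trunc_inv_pow_le[OF \<mu>]) simp_all
    then show ?thesis
      using True by (simp add: G_def mult.commute)
  qed (simp add: G_def)
  then have "(\<Sum>i. G (i + N)) \<le> (\<Sum>i. ennreal ((real n + 1) ^ (k + 1)) * ennreal (if i + N \<in> B then w (i + N) else 0))"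
    by (intro suminf_le) auto
  moreover have "(\<Sum>i. G i) = ennreal (trunc_inv_moment_sum B w k n N \<mu>) + (\<Sum>i. G (i + N))"
  proof -
    have "(\<Sum>i<N. G i) = ennreal (trunc_inv_moment_sum B w k n N \<mu>)"
      unfolding G_def by (rule sum_trunc_inv_moment_terms[where B=B and \<mu>=\<mu> and w=w, OF \<mu> w])
    moreover have "(\<Sum>i. G i) = (\<Sum>i. G (i + N)) + (\<Sum>i<N. G i)"
      by (rule suminf_offset[OF summableI])
    ultimately show ?thesis
      by (simp add: add.commute)
  qed
  ultimately have "(\<Sum>i. G i) \<le> ennreal (trunc_inv_moment_sum B w k n N \<mu>)
      + ennreal ((real n + 1) ^ (k + 1)) * (\<Sum>i. ennreal (if i + N \<in> B then w (i + N) else 0))"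
    by (simp add: add_left_mono)
  from order_trans[OF split add_right_mono[OF this]] show ?thesis
    by (simp add: e_def)
qed

lemma inv_moment_sum_finite_imp_summable:
  assumes M: "0 < M" and \<mu>: "\<And>i. i \<in> B \<Longrightarrow> \<mu> i \<in> probs_0M M" and w: "\<And>i. 0 \<le> w i"
    and fin: "inv_moment_sum B w 0 \<mu> < \<infinity>"
  shows "summable (\<lambda>i. if i \<in> B then w i else 0)"
proof -
  define a where "a i = (if i \<in> B then w i else 0)" for i
  have "ennreal (a i / M) \<le> (if i \<in> B then ennreal (w i) * (\<integral>\<^sup>+ t. inv_pow 0 t \<partial>\<mu> i) else 0)" for i
  proof (cases "i \<in> B")
    case True
    interpret prob_space "\<mu> i"
      using \<mu>[OF True] by (rule prob_space_probs_0M)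
    have "ennreal (1 / M) \<le> inv_pow 0 t" if "t \<in> space (\<mu> i)" for t
    proof (cases "t = 0")
      case False
      with that have "1 / M \<le> 1 / t"
        using space_probs_0M[OF \<mu>[OF True]] by (intro frac_le) auto
      with False show ?thesis
        by (simp add: inv_pow_def ennreal_leI)
    qed (simp add: inv_pow_def)
    then have "(\<integral>\<^sup>+ t. ennreal (1 / M) \<partial>\<mu> i) \<le> (\<integral>\<^sup>+ t. inv_pow 0 t \<partial>\<mu> i)"
      by (rule nn_integral_mono)
    then have "ennreal (w i) * ennreal (1 / M) \<le> ennreal (w i) * (\<integral>\<^sup>+ t. inv_pow 0 t \<partial>\<mu> i)"
      by (intro mult_left_mono) (simp_all add: emeasure_space_1)
    moreover have "ennreal (a i / M) = ennreal (w i) * ennreal (1 / M)"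
      using True w[of i] M by (simp add: a_def flip: ennreal_mult)
    ultimately show ?thesis
      using True by simp
  qed (simp add: a_def)
  then have "(\<Sum>i. ennreal (a i / M)) \<le> inv_moment_sum B w 0 \<mu>"
    unfolding inv_moment_sum_def by (intro suminf_le) auto
  moreover have "0 \<le> a i / M" for i
    using w M by (simp add: a_def)
  ultimately have "summable (\<lambda>i. a i / M)"
    using fin by (intro summable_suminf_not_top) (auto simp: top_unique)
  then have "summable (\<lambda>i. M * (a i / M))"
    by (rule summable_mult)
  with M show ?thesis
    by (simp add: a_def[abs_def])
qed

lemma continuous_map_integral_product_weak_top:
  fixes f :: "real \<Rightarrow> real"
  assumes "i \<in> B" and "continuous_on {0..M} f"
  shows "continuous_map (product_topology (\<lambda>_. weak_top M) B) euclideanreal (\<lambda>\<mu>. integral\<^sup>L (\<mu> i) f)"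
  using continuous_map_compose[OF continuous_map_product_projection[OF assms(1)]
      continuous_map_integral_weak_top[OF assms(2)]]
  by (simp add: o_def)

lemma continuous_map_trunc_inv_moment_sum:
  "continuous_map (product_topology (\<lambda>_. weak_top M) B) euclideanreal (trunc_inv_moment_sum B w k n N)"
proof -
  have "continuous_map (product_topology (\<lambda>_. weak_top M) B) euclideanreal
      (\<lambda>\<mu>. if i \<in> B then w i * integral\<^sup>L (\<mu> i) (trunc_inv_pow k n) else 0)" for i
    by (cases "i \<in> B")
       (simp_all add: continuous_map_real_mult_left continuous_map_integral_product_weak_top
         continuous_on_trunc_inv_pow)
  then show ?thesis
    unfolding trunc_inv_moment_sum_def[abs_def] by (intro continuous_map_sum) auto
qed

lemma probs_0M_of_topspace:
  "\<mu> \<in> topspace (product_topology (\<lambda>_. weak_top M) B) \<Longrightarrow> i \<in> B \<Longrightarrow> \<mu> i \<in> probs_0M M"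
  by (auto simp: topspace_weak_top PiE_iff)

lemma closedin_inv_moment_sum_le:
  assumes w: "\<And>i. 0 \<le> w i" and "0 \<le> c"
  shows "closedin (product_topology (\<lambda>_. weak_top M) B)
    {\<mu> \<in> topspace (product_topology (\<lambda>_. weak_top M) B). inv_moment_sum B w k \<mu> \<le> ennreal c}"
proof -
  let ?X = "product_topology (\<lambda>_. weak_top M) B"
  have "inv_moment_sum B w k \<mu> \<le> ennreal c \<longleftrightarrow> (\<forall>n N. trunc_inv_moment_sum B w k n N \<mu> \<le> c)"
    if "\<mu> \<in> topspace ?X" for \<mu>
    using that w \<open>0 \<le> c\<close> by (intro inv_moment_sum_le_iff probs_0M_of_topspace)
  then have "{\<mu> \<in> topspace ?X. inv_moment_sum B w k \<mu> \<le> ennreal c}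
      = {\<mu> \<in> topspace ?X. \<forall>n N. trunc_inv_moment_sum B w k n N \<mu> \<le> c}"
    by auto
  moreover have "closedin ?X {\<mu> \<in> topspace ?X. \<forall>n N. trunc_inv_moment_sum B w k n N \<mu> \<le> c}"
    by (intro closedin_Collect_all closedin_continuous_map_real(1) continuous_map_trunc_inv_moment_sum)
  ultimately show ?thesis
    by simp
qed

text \<open>When the \<open>\<kappa>\<close>-th inverse moment sum is at most \<open>D\<close>, the two summands bound the contributions
  of the omitted branches \<open>i \<ge> N\<close> and of the truncation near \<open>0\<close> to the \<open>k\<close>-th one.\<close>
definition trunc_error :: "nat set \<Rightarrow> (nat \<Rightarrow> real) \<Rightarrow> nat \<Rightarrow> nat \<Rightarrow> real \<Rightarrow> nat \<Rightarrow> nat \<Rightarrow> real" where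
  "trunc_error B w k \<kappa> D n N =
    (real n + 1) ^ (k + 1) * (\<Sum>i. if i + N \<in> B then w (i + N) else 0) + D / (real n + 1) ^ (\<kappa> - k)"

lemma trunc_error_nonneg:
  assumes "\<And>i. 0 \<le> w i" and "summable (\<lambda>i. if i \<in> B then w i else 0)" and "0 \<le> D"
  shows "0 \<le> trunc_error B w k \<kappa> D n N"
  using summable_ignore_initial_segment[OF assms(2), of N] assms(1,3)
  by (auto simp: trunc_error_def intro!: add_nonneg_nonneg mult_nonneg_nonneg suminf_nonneg)

lemma ex_trunc_error_less:
  assumes summable: "summable (\<lambda>i. if i \<in> B then w i else 0)" and "k < \<kappa>" and "0 \<le> D" and "0 < \<delta>"
  shows "\<exists>n N. trunc_error B w k \<kappa> D n N < \<delta>"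
proof -
  obtain n :: nat where n: "2 * D / \<delta> < n"
    using reals_Archimedean2 by blast
  have "D / (real n + 1) ^ (\<kappa> - k) \<le> D / (real n + 1)"
    using \<open>k < \<kappa>\<close> \<open>0 \<le> D\<close> by (intro divide_left_mono) (auto simp: self_le_power)
  also have "\<dots> < \<delta> / 2"
    using n \<open>0 < \<delta>\<close> by (simp add: field_simps)
  finally have small_D: "D / (real n + 1) ^ (\<kappa> - k) < \<delta> / 2" .
  define tail where "tail N = (\<Sum>i. if i + N \<in> B then w (i + N) else 0)" for N
  define P where "P = (real n + 1) ^ (k + 1)"
  have "0 < P"
    by (simp add: P_def)
  obtain N where "norm (tail N) < \<delta> / (2 * P)"
    using suminf_exist_split[OF _ summable, of "\<delta> / (2 * P)"] \<open>0 < \<delta>\<close> \<open>0 < P\<close>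
    by (auto simp: tail_def)
  then have "P * \<bar>tail N\<bar> < P * (\<delta> / (2 * P))"
    using \<open>0 < P\<close> by (intro mult_strict_left_mono) auto
  also have "\<dots> = \<delta> / 2"
    using \<open>0 < P\<close> by simp
  finally have "P * \<bar>tail N\<bar> < \<delta> / 2" .
  moreover have "P * tail N \<le> P * \<bar>tail N\<bar>"
    using \<open>0 < P\<close> by (intro mult_left_mono) auto
  ultimately have "P * tail N < \<delta> / 2"
    by linarith
  with small_D have "trunc_error B w k \<kappa> D n N < \<delta>"
    unfolding trunc_error_def tail_def[symmetric] P_def[symmetric] by linarith
  then show ?thesis
    by blast
qed

lemma inv_moment_sum_le_trunc_error:
  assumes \<mu>: "\<And>i. i \<in> B \<Longrightarrow> \<mu> i \<in> probs_0M M" and w: "\<And>i. 0 \<le> w i"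
    and summable: "summable (\<lambda>i. if i \<in> B then w i else 0)" and "k < \<kappa>"
    and bound: "inv_moment_sum B w \<kappa> \<mu> \<le> ennreal D" and "0 \<le> D"
  shows "inv_moment_sum B w k \<mu> \<le> ennreal (trunc_inv_moment_sum B w k n N \<mu> + trunc_error B w k \<kappa> D n N)"
proof -
  define T where "T = (\<Sum>i. if i + N \<in> B then w (i + N) else 0)"
  have T_summable: "summable (\<lambda>i. if i + N \<in> B then w (i + N) else 0)"
    using summable_ignore_initial_segment[OF summable, of N] by simp
  then have "0 \<le> T"
    unfolding T_def using w by (intro suminf_nonneg) auto
  have tail: "(\<Sum>i. ennreal (if i + N \<in> B then w (i + N) else 0)) = ennreal T"
    unfolding T_def using T_summable w by (intro suminf_ennreal2) auto
  have "inv_moment_sum B w k \<mu> \<le> ennreal (trunc_inv_moment_sum B w k n N \<mu>)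
      + ennreal ((real n + 1) ^ (k + 1)) * (\<Sum>i. ennreal (if i + N \<in> B then w (i + N) else 0))
      + ennreal (1 / (real n + 1) ^ (\<kappa> - k)) * inv_moment_sum B w \<kappa> \<mu>"
    by (rule inv_moment_sum_le_trunc[where B=B and \<mu>=\<mu> and w=w and n=n and N=N, OF \<mu> w \<open>k < \<kappa>\<close>])
  also have "\<dots> \<le> ennreal (trunc_inv_moment_sum B w k n N \<mu>)
      + ennreal ((real n + 1) ^ (k + 1)) * ennreal T + ennreal (1 / (real n + 1) ^ (\<kappa> - k)) * ennreal D"
    unfolding tail by (intro add_left_mono mult_left_mono bound) simp
  also have "\<dots> = ennreal (trunc_inv_moment_sum B w k n N \<mu> + trunc_error B w k \<kappa> D n N)"
  proof -
    have "ennreal ((real n + 1) ^ (k + 1)) * ennreal T = ennreal ((real n + 1) ^ (k + 1) * T)"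
      using \<open>0 \<le> T\<close> by (simp add: ennreal_mult)
    moreover have "ennreal (1 / (real n + 1) ^ (\<kappa> - k)) * ennreal D = ennreal (D / (real n + 1) ^ (\<kappa> - k))"
      using \<open>0 \<le> D\<close> by (simp add: ennreal_mult[symmetric])
    ultimately show ?thesis
      using \<open>0 \<le> T\<close> \<open>0 \<le> D\<close> trunc_inv_moment_sum_nonneg[of w, OF w]
      by (simp add: trunc_error_def T_def[symmetric] ennreal_plus add.assoc)
  qed
  finally show ?thesis .
qed

lemma ennreal_le_inv_moment_sum_iff:
  assumes \<mu>: "\<And>i. i \<in> B \<Longrightarrow> \<mu> i \<in> probs_0M M" and w: "\<And>i. 0 \<le> w i"
    and summable: "summable (\<lambda>i. if i \<in> B then w i else 0)" and "k < \<kappa>"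
    and bound: "inv_moment_sum B w \<kappa> \<mu> \<le> ennreal D" and "0 \<le> D"
  shows "ennreal c \<le> inv_moment_sum B w k \<mu>
    \<longleftrightarrow> (\<forall>n N. c - trunc_error B w k \<kappa> D n N \<le> trunc_inv_moment_sum B w k n N \<mu>)"
proof
  assume c: "ennreal c \<le> inv_moment_sum B w k \<mu>"
  show "\<forall>n N. c - trunc_error B w k \<kappa> D n N \<le> trunc_inv_moment_sum B w k n N \<mu>"
  proof (intro allI)
    fix n N
    have "ennreal c \<le> ennreal (trunc_inv_moment_sum B w k n N \<mu> + trunc_error B w k \<kappa> D n N)"
      using c inv_moment_sum_le_trunc_error[where B=B and \<mu>=\<mu> and w=w, OF \<mu> w summable \<open>k < \<kappa>\<close> bound \<open>0 \<le> D\<close>]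
      by (rule order_trans)
    moreover have "0 \<le> trunc_inv_moment_sum B w k n N \<mu> + trunc_error B w k \<kappa> D n N"
      using trunc_inv_moment_sum_nonneg[of w, OF w] trunc_error_nonneg[where w=w and B=B, OF w summable \<open>0 \<le> D\<close>]
      by simp
    ultimately have "c \<le> trunc_inv_moment_sum B w k n N \<mu> + trunc_error B w k \<kappa> D n N"
      by (simp only: ennreal_le_iff)
    then show "c - trunc_error B w k \<kappa> D n N \<le> trunc_inv_moment_sum B w k n N \<mu>"
      by linarith
  qed
next
  assume trunc: "\<forall>n N. c - trunc_error B w k \<kappa> D n N \<le> trunc_inv_moment_sum B w k n N \<mu>"
  show "ennreal c \<le> inv_moment_sum B w k \<mu>"
  proof (rule ennreal_le_epsilon)
    fix \<delta> :: real assume "0 < \<delta>"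
    then obtain n N where "trunc_error B w k \<kappa> D n N < \<delta>"
      using ex_trunc_error_less[OF summable \<open>k < \<kappa>\<close> \<open>0 \<le> D\<close>] by blast
    then have "c \<le> trunc_inv_moment_sum B w k n N \<mu> + \<delta>"
      using trunc[rule_format, of n N] by linarith
    then have "ennreal c \<le> ennreal (trunc_inv_moment_sum B w k n N \<mu> + \<delta>)"
      by (rule ennreal_leI)
    also have "\<dots> = ennreal (trunc_inv_moment_sum B w k n N \<mu>) + ennreal \<delta>"
      using trunc_inv_moment_sum_nonneg[of w, OF w] \<open>0 < \<delta>\<close> by (simp add: ennreal_plus)
    also have "\<dots> \<le> inv_moment_sum B w k \<mu> + ennreal \<delta>"
      using trunc_inv_moment_sum_le[where B=B and \<mu>=\<mu> and w=w, OF \<mu> w] by (rule add_right_mono)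
    finally show "ennreal c \<le> inv_moment_sum B w k \<mu> + ennreal \<delta>" .
  qed
qed

lemma closedin_inv_moment_sum_ge:
  assumes w: "\<And>i. 0 \<le> w i" and summable: "summable (\<lambda>i. if i \<in> B then w i else 0)"
    and "k < \<kappa>" and "0 \<le> D"
  shows "closedin (product_topology (\<lambda>_. weak_top M) B)
    {\<mu> \<in> topspace (product_topology (\<lambda>_. weak_top M) B).
      inv_moment_sum B w \<kappa> \<mu> \<le> ennreal D \<and> ennreal c \<le> inv_moment_sum B w k \<mu>}"
proof -
  let ?X = "product_topology (\<lambda>_. weak_top M) B"
  have "ennreal c \<le> inv_moment_sum B w k \<mu>
      \<longleftrightarrow> (\<forall>n N. c - trunc_error B w k \<kappa> D n N \<le> trunc_inv_moment_sum B w k n N \<mu>)"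
    if "\<mu> \<in> topspace ?X" and "inv_moment_sum B w \<kappa> \<mu> \<le> ennreal D" for \<mu>
    using that w summable \<open>k < \<kappa>\<close> \<open>0 \<le> D\<close> by (intro ennreal_le_inv_moment_sum_iff probs_0M_of_topspace)
  then have "{\<mu> \<in> topspace ?X. inv_moment_sum B w \<kappa> \<mu> \<le> ennreal D \<and> ennreal c \<le> inv_moment_sum B w k \<mu>}
      = {\<mu> \<in> topspace ?X. inv_moment_sum B w \<kappa> \<mu> \<le> ennreal D
          \<and> (\<forall>n N. c - trunc_error B w k \<kappa> D n N \<le> trunc_inv_moment_sum B w k n N \<mu>)}"
    by (intro Collect_cong) blast
  moreover have "closedin ?X {\<mu> \<in> topspace ?X. inv_moment_sum B w \<kappa> \<mu> \<le> ennreal D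
      \<and> (\<forall>n N. c - trunc_error B w k \<kappa> D n N \<le> trunc_inv_moment_sum B w k n N \<mu>)}"
    by (intro closedin_Collect_conj closedin_inv_moment_sum_le[OF w \<open>0 \<le> D\<close>] closedin_Collect_all
        closedin_continuous_map_real(2) continuous_map_trunc_inv_moment_sum)
  ultimately show ?thesis
    by simp
qed

lemma closedin_moment_conditions:
  "closedin (product_topology (\<lambda>_. weak_top M) B) {\<mu> \<in> topspace (product_topology (\<lambda>_. weak_top M) B).
    \<forall>i. i \<in> B \<longrightarrow> (\<forall>n<p. integral\<^sup>L (\<mu> i) (\<lambda>t. t ^ n) = m i n)}"
  by (intro closedin_Collect_all closedin_Collect_imp closedin_continuous_map_real(3)
      continuous_map_integral_product_weak_top) (auto intro: continuous_intros)

lemma closedin_inv_moment_conditions: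
  assumes w: "\<And>i. 0 \<le> w i" and C: "\<And>k. 0 \<le> C k"
    and summable: "0 < \<kappa> \<Longrightarrow> summable (\<lambda>i. if i \<in> B then w i else 0)"
  shows "closedin (product_topology (\<lambda>_. weak_top M) B) {\<mu> \<in> topspace (product_topology (\<lambda>_. weak_top M) B).
    (\<forall>k<\<kappa>. inv_moment_sum B w k \<mu> = ennreal (C k)) \<and> inv_moment_sum B w \<kappa> \<mu> \<le> ennreal (C \<kappa>)}"
proof -
  let ?X = "product_topology (\<lambda>_. weak_top M) B"
  \<comment> \<open>Each equality is split into a lower bound, closed only under the bound for \<open>\<kappa>\<close>, and an upper bound.\<close>
  have "closedin ?X {\<mu> \<in> topspace ?X. \<forall>k<\<kappa>. (inv_moment_sum B w \<kappa> \<mu> \<le> ennreal (C \<kappa>)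
      \<and> ennreal (C k) \<le> inv_moment_sum B w k \<mu>) \<and> inv_moment_sum B w k \<mu> \<le> ennreal (C k)}"
  proof (intro closedin_Collect_all closedin_Collect_imp)
    fix k assume "k < \<kappa>"
    then have summable_w: "summable (\<lambda>i. if i \<in> B then w i else 0)"
      by (intro summable) simp
    show "closedin ?X {\<mu> \<in> topspace ?X. (inv_moment_sum B w \<kappa> \<mu> \<le> ennreal (C \<kappa>)
        \<and> ennreal (C k) \<le> inv_moment_sum B w k \<mu>) \<and> inv_moment_sum B w k \<mu> \<le> ennreal (C k)}"
      by (rule closedin_Collect_conj[OF closedin_inv_moment_sum_ge[OF w summable_w \<open>k < \<kappa>\<close> C]
            closedin_inv_moment_sum_le[OF w C]])
  qed
  then have "closedin ?X {\<mu> \<in> topspace ?X. (\<forall>k<\<kappa>. (inv_moment_sum B w \<kappa> \<mu> \<le> ennreal (C \<kappa>)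
      \<and> ennreal (C k) \<le> inv_moment_sum B w k \<mu>) \<and> inv_moment_sum B w k \<mu> \<le> ennreal (C k))
      \<and> inv_moment_sum B w \<kappa> \<mu> \<le> ennreal (C \<kappa>)}"
    by (intro closedin_Collect_conj closedin_inv_moment_sum_le[OF w C])
  moreover have "(\<forall>k<\<kappa>. (inv_moment_sum B w \<kappa> \<mu> \<le> ennreal (C \<kappa>)
      \<and> ennreal (C k) \<le> inv_moment_sum B w k \<mu>) \<and> inv_moment_sum B w k \<mu> \<le> ennreal (C k))
      \<and> inv_moment_sum B w \<kappa> \<mu> \<le> ennreal (C \<kappa>)
    \<longleftrightarrow> (\<forall>k<\<kappa>. inv_moment_sum B w k \<mu> = ennreal (C k)) \<and> inv_moment_sum B w \<kappa> \<mu> \<le> ennreal (C \<kappa>)" for \<mu>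
    by (auto simp: order.eq_iff)
  ultimately show ?thesis
    by simp
qed

lemma moment_probs_0M_eq_iff:
  assumes \<mu>: "\<mu> \<in> probs_0M M" and "0 \<le> c"
  shows "(\<integral>\<^sup>+ t. ennreal (t ^ n) \<partial>\<mu>) = ennreal c \<longleftrightarrow> integral\<^sup>L \<mu> (\<lambda>t. t ^ n) = c"
proof -
  have "(\<integral>\<^sup>+ t. ennreal (t ^ n) \<partial>\<mu>) = ennreal (integral\<^sup>L \<mu> (\<lambda>t. t ^ n))"
    using \<mu> by (intro nn_integral_probs_0M_eq_integral) (auto intro: continuous_intros)
  moreover have "0 \<le> integral\<^sup>L \<mu> (\<lambda>t. t ^ n)"
    by (intro Bochner_Integration.integral_nonneg) (auto simp: space_probs_0M[OF \<mu>])
  ultimately show ?thesis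
    using \<open>0 \<le> c\<close> by simp
qed

lemma U_set_subset_topspace:
  assumes "1 \<le> p"
  shows "U_set M \<kappa> \<eta> p lneg lam \<subseteq> topspace (product_topology (\<lambda>_. weak_top M) (branches \<eta>))"
proof
  fix \<mu> assume \<mu>: "\<mu> \<in> U_set M \<kappa> \<eta> p lneg lam"
  have "\<mu> i \<in> probs_0M M" if "i \<in> branches \<eta>" for i
  proof -
    have "sets (\<mu> i) = sets (borel_0M M)"
      and moments: "\<forall>n<p. (\<integral>\<^sup>+ t. ennreal (t ^ n) \<partial>\<mu> i) = ennreal (\<Prod>j\<in>{2..n + 1}. (lam i j)\<^sup>2)"
      using \<mu> that unfolding U_set_def by auto
    moreover have "emeasure (\<mu> i) (space (\<mu> i)) = 1"
      using moments[rule_format, of 0] assms by simp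
    ultimately show ?thesis
      unfolding probs_0M_def by (auto intro: prob_spaceI)
  qed
  with \<mu> show "\<mu> \<in> topspace (product_topology (\<lambda>_. weak_top M) (branches \<eta>))"
    by (auto simp: U_set_def topspace_weak_top PiE_iff)
qed

lemma U_set_eq_constraints:
  assumes "1 \<le> p"
  shows "U_set M \<kappa> \<eta> p lneg lam = {\<mu> \<in> topspace (product_topology (\<lambda>_. weak_top M) (branches \<eta>)).
    (\<forall>i. i \<in> branches \<eta> \<longrightarrow> (\<forall>n<p. integral\<^sup>L (\<mu> i) (\<lambda>t. t ^ n) = (\<Prod>j\<in>{2..n + 1}. (lam i j)\<^sup>2))) \<and>
    (\<forall>k<\<kappa>. inv_moment_sum (branches \<eta>) (\<lambda>i. (lam i 1)\<^sup>2) k \<mu> = ennreal (1 / (\<Prod>j<k. (lneg j)\<^sup>2))) \<and>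
    inv_moment_sum (branches \<eta>) (\<lambda>i. (lam i 1)\<^sup>2) \<kappa> \<mu> \<le> ennreal (1 / (\<Prod>j<\<kappa>. (lneg j)\<^sup>2))}"
    (is "_ = {\<mu> \<in> topspace ?X. ?moments \<mu> \<and> ?inv_moments \<mu>}")
proof -
  have moment_iff: "(\<integral>\<^sup>+ t. ennreal (t ^ n) \<partial>\<mu> i) = ennreal (\<Prod>j\<in>{2..n + 1}. (lam i j)\<^sup>2)
      \<longleftrightarrow> integral\<^sup>L (\<mu> i) (\<lambda>t. t ^ n) = (\<Prod>j\<in>{2..n + 1}. (lam i j)\<^sup>2)"
    if "\<mu> \<in> topspace ?X" and "i \<in> branches \<eta>" for \<mu> i n
    using probs_0M_of_topspace[OF that] by (rule moment_probs_0M_eq_iff) (simp add: prod_nonneg)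
  show ?thesis
  proof (intro set_eqI iffI)
    fix \<mu> assume \<mu>: "\<mu> \<in> U_set M \<kappa> \<eta> p lneg lam"
    then have top: "\<mu> \<in> topspace ?X"
      using U_set_subset_topspace[OF assms] by blast
    with \<mu> moment_iff show "\<mu> \<in> {\<mu> \<in> topspace ?X. ?moments \<mu> \<and> ?inv_moments \<mu>}"
      unfolding U_set_def inv_moment_sum_def by auto
  next
    fix \<mu> assume \<mu>: "\<mu> \<in> {\<mu> \<in> topspace ?X. ?moments \<mu> \<and> ?inv_moments \<mu>}"
    then have top: "\<mu> \<in> topspace ?X"
      by blast
    then have "\<mu> \<in> extensional (branches \<eta>)" "\<forall>i\<in>branches \<eta>. sets (\<mu> i) = sets (borel_0M M)"
      by (auto simp: PiE_iff topspace_weak_top probs_0M_def)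
    with \<mu> top moment_iff show "\<mu> \<in> U_set M \<kappa> \<eta> p lneg lam"
      unfolding U_set_def inv_moment_sum_def by auto
  qed
qed

lemma closedin_U_set:
  assumes "1 \<le> p" and "0 < M"
  shows "closedin (product_topology (\<lambda>_. weak_top M) (branches \<eta>)) (U_set M \<kappa> \<eta> p lneg lam)"
proof (cases "U_set M \<kappa> \<eta> p lneg lam = {}")
  case False
  then obtain \<mu>0 where \<mu>0: "\<mu>0 \<in> U_set M \<kappa> \<eta> p lneg lam"
    by blast
  have summable: "summable (\<lambda>i. if i \<in> branches \<eta> then (lam i 1)\<^sup>2 else 0)" if "0 < \<kappa>"
  proof (rule inv_moment_sum_finite_imp_summable[OF \<open>0 < M\<close>])
    show "\<mu>0 i \<in> probs_0M M" if "i \<in> branches \<eta>" for i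
      using \<mu>0 U_set_subset_topspace[OF assms(1)] that by (blast intro: probs_0M_of_topspace)
    show "inv_moment_sum (branches \<eta>) (\<lambda>i. (lam i 1)\<^sup>2) 0 \<mu>0 < \<infinity>"
      using \<mu>0 that by (simp add: U_set_eq_constraints[OF assms(1)])
  qed simp
  show ?thesis
    unfolding U_set_eq_constraints[OF assms(1)]
    by (intro closedin_moment_conditions closedin_inv_moment_conditions closedin_Collect_conj summable)
       (simp_all add: prod_nonneg)
qed simp

theorem theorem6p6:
  fixes \<kappa> p :: nat and \<eta> :: enat and lneg :: "nat \<Rightarrow> real" and lam :: "nat \<Rightarrow> nat \<Rightarrow> real"
    and M :: real
  assumes "\<eta> \<ge> 2" and "p \<ge> 1"
    and "\<forall>k<\<kappa>. lneg k > 0"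
    and "\<forall>i\<in>branches \<eta>. \<forall>j\<in>{1..p}. lam i j > 0"
    and "has_subnormal_completion \<kappa> \<eta> p lneg lam"
    and "M > 0"
  shows "compactin (product_topology (\<lambda>_. weak_top M) (branches \<eta>)) (U_set M \<kappa> \<eta> p lneg lam)"
proof -
  have "compact_space (product_topology (\<lambda>_. weak_top M) (branches \<eta>))"
    using compact_space_weak_top[of M] \<open>M > 0\<close> by (simp add: compact_space_product_topology)
  then show ?thesis
    using closedin_U_set[OF \<open>p \<ge> 1\<close> \<open>M > 0\<close>] by (rule closedin_compact_space)
qed

end
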